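(* Let $G$ be a graph on $n\ge 3$ vertices with no isolated vertices, and let $r$ be a positive integer. If $\mathscr{Z}^{\rm TAR}(G)\cong K_{1,r}\,\square\,K_2$, then $G\cong K_{1,r}$.
   Context: Zero forcing: starting with a set $S$ of blue vertices, a blue vertex $v$ may turn blue a white vertex $w$ if $w$ is the only white neighbor of $v$; $S$ is a zero forcing set if repeated application colors all vertices blue. $\mathscr{Z}^{\rm TAR}(G)$ has vertices the zero forcing sets of $G$, two adjacent iff their symmetric difference has size 1. $K_{1,r}$ is the star with $r$ leaves and $\square$ is the Cartesian product of graphs. *)

theory Defs
  imports Main
begin

definition graph :: "'a set \<Rightarrow> ('a \<Rightarrow> 'a \<Rightarrow> bool) \<Rightarrow> bool" where
  "graph V E \<longleftrightarrow> finite V \<and> (\<forall>x y. E x y \<longrightarrow> x \<in> V \<and> y \<in> V \<and> x \<noteq> y \<and> E y x)"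

definition graph_iso :: "'a set \<Rightarrow> ('a \<Rightarrow> 'a \<Rightarrow> bool) \<Rightarrow> 'b set \<Rightarrow> ('b \<Rightarrow> 'b \<Rightarrow> bool) \<Rightarrow> bool" where
  "graph_iso V1 E1 V2 E2 \<longleftrightarrow>
     (\<exists>f. bij_betw f V1 V2 \<and> (\<forall>x\<in>V1. \<forall>y\<in>V1. E1 x y \<longleftrightarrow> E2 (f x) (f y)))"

inductive_set zf_closure :: "'a set \<Rightarrow> ('a \<Rightarrow> 'a \<Rightarrow> bool) \<Rightarrow> 'a set \<Rightarrow> 'a set"
  for V E S where
  base: "x \<in> S \<Longrightarrow> x \<in> zf_closure V E S"
| force: "\<lbrakk>v \<in> zf_closure V E S; v \<in> V; w \<in> V; E v w;
          \<forall>u. E v u \<and> u \<noteq> w \<longrightarrow> u \<in> zf_closure V E S\<rbrakk> \<Longrightarrow> w \<in> zf_closure V E S"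

definition zero_forcing_set :: "'a set \<Rightarrow> ('a \<Rightarrow> 'a \<Rightarrow> bool) \<Rightarrow> 'a set \<Rightarrow> bool" where
  "zero_forcing_set V E S \<longleftrightarrow> S \<subseteq> V \<and> zf_closure V E S = V"

definition ZTAR_V :: "'a set \<Rightarrow> ('a \<Rightarrow> 'a \<Rightarrow> bool) \<Rightarrow> 'a set set" where
  "ZTAR_V V E = {S. zero_forcing_set V E S}"

definition ZTAR_E :: "'a set \<Rightarrow> ('a \<Rightarrow> 'a \<Rightarrow> bool) \<Rightarrow> 'a set \<Rightarrow> 'a set \<Rightarrow> bool" where
  "ZTAR_E V E S T \<longleftrightarrow> S \<in> ZTAR_V V E \<and> T \<in> ZTAR_V V E \<and> card ((S - T) \<union> (T - S)) = 1"

definition star_V :: "nat \<Rightarrow> nat set" where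
  "star_V r = {0..r}"

definition star_E :: "nat \<Rightarrow> nat \<Rightarrow> nat \<Rightarrow> bool" where
  "star_E r x y \<longleftrightarrow> x \<in> star_V r \<and> y \<in> star_V r \<and> ((x = 0 \<and> y \<noteq> 0) \<or> (x \<noteq> 0 \<and> y = 0))"

definition K2_V :: "bool set" where "K2_V = UNIV"
definition K2_E :: "bool \<Rightarrow> bool \<Rightarrow> bool" where "K2_E x y \<longleftrightarrow> x \<noteq> y"

definition cart_V :: "'a set \<Rightarrow> 'b set \<Rightarrow> ('a \<times> 'b) set" where
  "cart_V V1 V2 = V1 \<times> V2"

definition cart_E :: "'a set \<Rightarrow> ('a \<Rightarrow> 'a \<Rightarrow> bool) \<Rightarrow> 'b set \<Rightarrow> ('b \<Rightarrow> 'b \<Rightarrow> bool)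
    \<Rightarrow> 'a \<times> 'b \<Rightarrow> 'a \<times> 'b \<Rightarrow> bool" where
  "cart_E V1 E1 V2 E2 p q \<longleftrightarrow> p \<in> V1 \<times> V2 \<and> q \<in> V1 \<times> V2 \<and>
     ((fst p = fst q \<and> E2 (snd p) (snd q)) \<or> (snd p = snd q \<and> E1 (fst p) (fst q)))"

end

theory Submission
  imports Defs
begin

text \<open>
  The neighbours of V in Z^TAR(G) are the n sets V - {v}; since n \<ge> 3, V must be mapped
  to a spine vertex (0, b) of the book K_{1,r} \<box> K_2, the only vertices of degree
  above 2. So exactly one deletion V - {c} goes to (0, \<not> b) and the others go to
  distinct pages (j, b), which yields a bijection between V and the star's vertices.
  The 4-cycle through (0, \<not> b), (0, b), (j, b), (j, \<not> b) shows that V - {c, w} is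
  zero forcing for all w \<noteq> c, whereas for v, w \<noteq> c the set V - {v, w} would be
  a second common neighbour of two pages besides (0, b), so it is not zero forcing.
  The latter makes all vertices other than c pairwise twins, and with the former this
  forces G to be the star centred at c.
\<close>

lemma graphD:
  assumes "graph V E" "E x y"
  shows "x \<in> V" "y \<in> V" "x \<noteq> y" "E y x"
  using assms unfolding graph_def by blast+

lemma zf_closure_subset: "S \<subseteq> V \<Longrightarrow> zf_closure V E S \<subseteq> V"
proof
  show "x \<in> V" if "S \<subseteq> V" "x \<in> zf_closure V E S" for x
    using that(2,1) by induct auto
qed

lemma zero_forcing_set_iff: "S \<subseteq> V \<Longrightarrow> zero_forcing_set V E S \<longleftrightarrow> V \<subseteq> zf_closure V E S"
  unfolding zero_forcing_set_def using zf_closure_subset by blast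

lemma zero_forcing_set_self: "zero_forcing_set V E V"
  by (simp add: zero_forcing_set_iff subsetI zf_closure.base)

lemma zf_closure_last_vertex:
  assumes "graph V E" "V - {w} \<subseteq> zf_closure V E S" "E w z"
  shows "w \<in> zf_closure V E S"
proof (rule zf_closure.force)
  show z: "z \<in> V" "w \<in> V" "E z w"
    using graphD[OF assms(1,3)] by auto
  show "z \<in> zf_closure V E S"
    using graphD(3)[OF assms(1,3)] z(1) assms(2) by blast
  show "\<forall>u. E z u \<and> u \<noteq> w \<longrightarrow> u \<in> zf_closure V E S"
    using assms(2) graphD(2)[OF assms(1)] by blast
qed

lemma zero_forcing_set_Diff_singleton:
  assumes "graph V E" "E v z"
  shows "zero_forcing_set V E (V - {v})"
proof -
  have "V - {v} \<subseteq> zf_closure V E (V - {v})" by (auto intro: zf_closure.base)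
  with zf_closure_last_vertex[OF assms(1) this assms(2)] have "V \<subseteq> zf_closure V E (V - {v})"
    by blast
  then show ?thesis by (simp add: zero_forcing_set_iff)
qed

lemma zero_forcing_set_Diff_pair:
  assumes G: "graph V E" and u: "u \<in> V - {v, w}" "E u v" "\<not> E u w" and "E w z"
  shows "zero_forcing_set V E (V - {v, w})"
proof -
  let ?C = "zf_closure V E (V - {v, w})"
  have "v \<in> ?C"
  proof (rule zf_closure.force)
    show "u \<in> ?C" using u by (auto intro: zf_closure.base)
    show "\<forall>y. E u y \<and> y \<noteq> v \<longrightarrow> y \<in> ?C"
      using u graphD(2)[OF G] by (auto intro: zf_closure.base)
  qed (use u graphD[OF G u(2)] in auto)
  then have "V - {w} \<subseteq> ?C" by (auto intro: zf_closure.base)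
  with zf_closure_last_vertex[OF G this \<open>E w z\<close>] have "V \<subseteq> ?C" by blast
  then show ?thesis by (simp add: zero_forcing_set_iff)
qed

lemma zf_closure_eq_if_no_force:
  assumes "\<forall>u\<in>S. \<forall>x\<in>V - S. E u x \<longrightarrow> (\<exists>y\<in>V - S. y \<noteq> x \<and> E u y)"
  shows "zf_closure V E S = S"
proof
  show "zf_closure V E S \<subseteq> S"
  proof
    show "x \<in> S" if "x \<in> zf_closure V E S" for x
      using that
    proof induct
      case (force v w)
      show ?case
      proof (rule ccontr)
        assume "w \<notin> S"
        with force assms obtain y where "y \<in> V - S" "y \<noteq> w" "E v y" by blast
        with force show False by blast
      qed
    qed
  qed
qed (auto intro: zf_closure.base)

lemma twins_if_not_zero_forcing_pair:
  assumes G: "graph V E" and no_isolated: "\<forall>v\<in>V. \<exists>u. E v u"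
    and "v \<in> V" "w \<in> V" "\<not> zero_forcing_set V E (V - {v, w})" "u \<in> V - {v, w}"
  shows "E u v \<longleftrightarrow> E u w"
proof (rule ccontr)
  obtain y z where "E v y" "E w z" using assms(3,4) no_isolated by blast
  assume "\<not> (E u v \<longleftrightarrow> E u w)"
  then consider "E u v" "\<not> E u w" | "E u w" "\<not> E u v" by blast
  then show False
  proof cases
    case 1
    with zero_forcing_set_Diff_pair[OF G _ 1 \<open>E w z\<close>] assms(5,6) show False by blast
  next
    case 2
    with zero_forcing_set_Diff_pair[OF G _ 2 \<open>E v y\<close>] assms(5,6) show False
      by (simp add: insert_commute)
  qed
qed

lemma star_if_zero_forcing_pairs:
  assumes G: "graph V E" and no_isolated: "\<forall>v\<in>V. \<exists>u. E v u" and "c \<in> V"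
    and with_centre: "\<And>w. w \<in> V - {c} \<Longrightarrow> zero_forcing_set V E (V - {c, w})"
    and without_centre: "\<And>v w. v \<in> V - {c} \<Longrightarrow> w \<in> V - {c} \<Longrightarrow> v \<noteq> w
      \<Longrightarrow> \<not> zero_forcing_set V E (V - {v, w})"
  shows "E x y \<longleftrightarrow> x \<in> V \<and> y \<in> V \<and> (x = c \<longleftrightarrow> y \<noteq> c)"
proof -
  have twins: "E u v \<longleftrightarrow> E u w"
    if "v \<in> V - {c}" "w \<in> V - {c}" "v \<noteq> w" "u \<in> V - {v, w}" for u v w
    using twins_if_not_zero_forcing_pair[OF G no_isolated] without_centre that by blast
  have centre: "E c w" if w: "w \<in> V - {c}" for w
  proof -
    obtain u where "E c u" using no_isolated \<open>c \<in> V\<close> by blast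
    show ?thesis
    proof (cases "u = w")
      case False
      have "E c u \<longleftrightarrow> E c w"
        by (rule twins) (use w False \<open>c \<in> V\<close> graphD[OF G \<open>E c u\<close>] in auto)
      with \<open>E c u\<close> show ?thesis by simp
    qed (use \<open>E c u\<close> in simp)
  qed
  have no_other_edge: "\<not> E v w" if v: "v \<in> V - {c}" and w: "w \<in> V - {c}" for v w
  proof
    assume "E v w"
    \<comment> \<open>every blue vertex then sees both white vertices c and w, so nothing is ever forced\<close>
    have "E u w" if u: "u \<in> V - {c, w}" for u
    proof (cases "u = v")
      case False
      have "E v u \<longleftrightarrow> E v w"
        by (rule twins) (use u v w False graphD[OF G \<open>E v w\<close>] in auto)
      moreover have "E u v \<longleftrightarrow> E u w"
        by (rule twins) (use u v w False graphD[OF G \<open>E v w\<close>] in auto)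
      ultimately show ?thesis using \<open>E v w\<close> graphD(4)[OF G] by blast
    qed (use \<open>E v w\<close> in simp)
    moreover have "E u c" if "u \<in> V - {c, w}" for u
      using centre[of u] graphD(4)[OF G] that by blast
    moreover have "V - (V - {c, w}) = {c, w}" using w \<open>c \<in> V\<close> by blast
    ultimately have "zf_closure V E (V - {c, w}) = V - {c, w}"
      using w by (intro zf_closure_eq_if_no_force) auto
    with with_centre[OF w] w show False
      by (auto simp: zero_forcing_set_def)
  qed
  show ?thesis
  proof
    assume "E x y"
    with graphD[OF G this] no_other_edge[of x y] show "x \<in> V \<and> y \<in> V \<and> (x = c \<longleftrightarrow> y \<noteq> c)"
      by auto
  next
    assume "x \<in> V \<and> y \<in> V \<and> (x = c \<longleftrightarrow> y \<noteq> c)"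
    with centre[of x] centre[of y] graphD(4)[OF G] show "E x y" by auto
  qed
qed

lemma card_sym_diff_eq_1_iff:
  "card (sym_diff S T) = 1 \<longleftrightarrow> (\<exists>x. x \<in> S \<and> T = S - {x} \<or> x \<notin> S \<and> T = insert x S)"
proof
  assume "card (sym_diff S T) = 1"
  then obtain x where x: "sym_diff S T = {x}" by (rule card_1_singletonE)
  then have "y \<in> T \<longleftrightarrow> (y \<in> S \<longleftrightarrow> y \<noteq> x)" for y by (auto dest: equalityD1 equalityD2)
  then have "x \<in> S \<and> T = S - {x} \<or> x \<notin> S \<and> T = insert x S" by auto
  then show "\<exists>x. x \<in> S \<and> T = S - {x} \<or> x \<notin> S \<and> T = insert x S" ..
next
  assume "\<exists>x. x \<in> S \<and> T = S - {x} \<or> x \<notin> S \<and> T = insert x S"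
  then obtain x where "x \<in> S \<and> T = S - {x} \<or> x \<notin> S \<and> T = insert x S" ..
  then have "sym_diff S T = {x}" by auto
  then show "card (sym_diff S T) = 1" by simp
qed

lemma ZTAR_E_iff:
  "ZTAR_E V E S T \<longleftrightarrow> zero_forcing_set V E S \<and> zero_forcing_set V E T \<and>
     (\<exists>x. x \<in> S \<and> T = S - {x} \<or> x \<notin> S \<and> T = insert x S)"
  unfolding ZTAR_E_def ZTAR_V_def card_sym_diff_eq_1_iff[symmetric] by simp

lemma ZTAR_neighbours_top:
  assumes G: "graph V E" and no_isolated: "\<forall>v\<in>V. \<exists>u. E v u"
  shows "{T. ZTAR_E V E V T} = (\<lambda>v. V - {v}) ` V"
proof (intro set_eqI iffI)
  fix T assume "T \<in> {T. ZTAR_E V E V T}"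
  then have "T \<subseteq> V" "\<exists>x. x \<in> V \<and> T = V - {x} \<or> x \<notin> V \<and> T = insert x V"
    by (auto simp: ZTAR_E_iff zero_forcing_set_def)
  then show "T \<in> (\<lambda>v. V - {v}) ` V" by blast
next
  fix T assume "T \<in> (\<lambda>v. V - {v}) ` V"
  then obtain v where v: "v \<in> V" "T = V - {v}" by blast
  obtain u where "E v u" using no_isolated v(1) by blast
  with zero_forcing_set_Diff_singleton[OF G this] zero_forcing_set_self[of V E] v
  show "T \<in> {T. ZTAR_E V E V T}" by (auto simp: ZTAR_E_iff)
qed

lemma ZTAR_common_neighbour:
  assumes "ZTAR_E V E (V - {v}) T" "ZTAR_E V E (V - {w}) T" "T \<noteq> V" "w \<in> V" "v \<noteq> w"
  shows "T = V - {v, w}"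
proof -
  have "T \<subseteq> V" using assms(1) by (simp add: ZTAR_E_iff zero_forcing_set_def)
  have "\<exists>x. T = V - {u, x}" if adj: "ZTAR_E V E (V - {u}) T" for u
  proof -
    obtain x where "x \<in> V - {u} \<and> T = V - {u} - {x} \<or> x \<notin> V - {u} \<and> T = insert x (V - {u})"
      using adj unfolding ZTAR_E_iff by blast
    moreover have "insert x (V - {u}) = V" if "x \<notin> V - {u}" "insert x (V - {u}) \<subseteq> V"
      using that by blast
    ultimately have "T = V - {u} - {x}" using \<open>T \<subseteq> V\<close> \<open>T \<noteq> V\<close> by blast
    then show ?thesis by blast
  qed
  with assms(1,2) obtain x y where T: "T = V - {v, x}" "T = V - {w, y}" by metis
  with assms(4,5) have "w = x" by blast
  with T(1) show ?thesis by simp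
qed

lemma ZTAR_E_Diff_pair:
  assumes "zero_forcing_set V E (V - {v})" "zero_forcing_set V E (V - {v, w})" "w \<in> V" "w \<noteq> v"
  shows "ZTAR_E V E (V - {v}) (V - {v, w})"
proof -
  have "V - {v, w} = V - {v} - {w}" by blast
  with assms show ?thesis by (auto simp: ZTAR_E_iff)
qed

lemma iso_image_neighbours:
  assumes f: "bij_betw f V1 V2" and edges: "\<forall>x\<in>V1. \<forall>y\<in>V1. E1 x y \<longleftrightarrow> E2 (f x) (f y)"
    and E1: "\<And>x y. E1 x y \<Longrightarrow> y \<in> V1" and E2: "\<And>x y. E2 x y \<Longrightarrow> y \<in> V2" and "x \<in> V1"
  shows "f ` {y. E1 x y} = {z. E2 (f x) z}"
proof (intro set_eqI iffI)
  fix z assume "z \<in> f ` {y. E1 x y}"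
  with E1 edges \<open>x \<in> V1\<close> show "z \<in> {z. E2 (f x) z}" by blast
next
  fix z assume "z \<in> {z. E2 (f x) z}"
  with E2 obtain y where "y \<in> V1" "z = f y" using f by (metis bij_betw_imp_surj_on imageE mem_Collect_eq)
  with \<open>z \<in> {z. E2 (f x) z}\<close> edges \<open>x \<in> V1\<close> show "z \<in> f ` {y. E1 x y}" by blast
qed

text \<open>K_{1,r} \<box> K_2 is the book graph: (0, b) are its two spine vertices and (j, b),
  for 1 \<le> j \<le> r, its page vertices.\<close>

abbreviation book_V :: "nat \<Rightarrow> (nat \<times> bool) set" where
  "book_V r \<equiv> cart_V (star_V r) K2_V"

abbreviation book_E :: "nat \<Rightarrow> nat \<times> bool \<Rightarrow> nat \<times> bool \<Rightarrow> bool" where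
  "book_E r \<equiv> cart_E (star_V r) (star_E r) K2_V K2_E"

lemma book_V_eq: "book_V r = {..r} \<times> UNIV"
  by (auto simp: cart_V_def star_V_def K2_V_def)

lemma book_E_iff:
  "book_E r p q \<longleftrightarrow> fst p \<le> r \<and> fst q \<le> r \<and>
     (fst p = fst q \<and> snd p \<noteq> snd q \<or> snd p = snd q \<and> (fst p = 0 \<longleftrightarrow> fst q \<noteq> 0))"
  by (auto simp: cart_E_def star_E_def star_V_def K2_V_def K2_E_def mem_Times_iff)

lemma book_E_imp_in_book_V: "book_E r p q \<Longrightarrow> q \<in> book_V r"
  by (simp add: cart_E_def cart_V_def)

lemma book_neighbours_spine: "{q. book_E r (0, b) q} = insert (0, \<not> b) ({1..r} \<times> {b})"
  by (auto simp: book_E_iff)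

lemma book_neighbours_page: "i \<noteq> 0 \<Longrightarrow> {q. book_E r (i, b) q} \<subseteq> {(i, \<not> b), (0, b)}"
  by (auto simp: book_E_iff)

lemma inj_on_Diff_singleton: "inj_on (\<lambda>v. A - {v}) A"
  by (auto intro!: inj_onI)

lemma graph_iso_starI:
  assumes g: "bij_betw g V (star_V r)" and "c \<in> V" "g c = 0"
    and star: "\<And>x y. E x y \<longleftrightarrow> x \<in> V \<and> y \<in> V \<and> (x = c \<longleftrightarrow> y \<noteq> c)"
  shows "graph_iso V E (star_V r) (star_E r)"
proof -
  have "g x = 0 \<longleftrightarrow> x = c" if "x \<in> V" for x
    using assms(2,3) that bij_betw_imp_inj_on[OF g] by (metis inj_onD)
  moreover have "g x \<in> star_V r" if "x \<in> V" for x
    using g that bij_betwE by blast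
  ultimately have "E x y \<longleftrightarrow> star_E r (g x) (g y)" if "x \<in> V" "y \<in> V" for x y
    using that by (auto simp: star star_E_def)
  with g show ?thesis
    unfolding graph_iso_def by blast
qed

locale ZTAR_book_iso =
  fixes V :: "'a set" and E :: "'a \<Rightarrow> 'a \<Rightarrow> bool" and r :: nat and f :: "'a set \<Rightarrow> nat \<times> bool"
  assumes graph: "graph V E" and no_isolated: "\<forall>v\<in>V. \<exists>u. E v u" and card_V: "card V \<ge> 3"
    and bij: "bij_betw f (ZTAR_V V E) (book_V r)"
    and edges: "\<forall>S\<in>ZTAR_V V E. \<forall>T\<in>ZTAR_V V E. ZTAR_E V E S T \<longleftrightarrow> book_E r (f S) (f T)"
begin

lemma image_neighbours: "S \<in> ZTAR_V V E \<Longrightarrow> f ` {T. ZTAR_E V E S T} = {q. book_E r (f S) q}"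
  using iso_image_neighbours[OF bij edges _ book_E_imp_in_book_V] by (simp add: ZTAR_E_def)

lemma top_in_ZTAR_V: "V \<in> ZTAR_V V E"
  by (simp add: ZTAR_V_def zero_forcing_set_self)

lemma deletion_in_ZTAR_V: "v \<in> V \<Longrightarrow> V - {v} \<in> ZTAR_V V E"
  using no_isolated zero_forcing_set_Diff_singleton[OF graph] by (auto simp: ZTAR_V_def)

lemma f_eq_iff: "S \<in> ZTAR_V V E \<Longrightarrow> T \<in> ZTAR_V V E \<Longrightarrow> f S = f T \<longleftrightarrow> S = T"
  using bij_betw_imp_inj_on[OF bij] by (auto dest: inj_onD)

lemma card_neighbours_top: "card {q. book_E r (f V) q} = card V"
proof -
  have "card {q. book_E r (f V) q} = card (f ` (\<lambda>v. V - {v}) ` V)"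
    using image_neighbours[OF top_in_ZTAR_V] ZTAR_neighbours_top[OF graph no_isolated] by simp
  also have "\<dots> = card V"
  proof -
    have "(\<lambda>v. V - {v}) ` V \<subseteq> ZTAR_V V E" using deletion_in_ZTAR_V by blast
    then have "inj_on f ((\<lambda>v. V - {v}) ` V)"
      using bij_betw_imp_inj_on[OF bij] by (rule inj_on_subset[rotated])
    then show ?thesis by (simp add: card_image inj_on_Diff_singleton)
  qed
  finally show ?thesis .
qed

lemma f_top_on_spine: "fst (f V) = 0"
proof (rule ccontr)
  obtain i b where fV: "f V = (i, b)" by fastforce
  assume "fst (f V) \<noteq> 0"
  with fV have "card {q. book_E r (f V) q} \<le> card {(i, \<not> b), (0, b)}"
    using book_neighbours_page by (intro card_mono) auto
  also have "\<dots> \<le> 2" by (simp add: card_insert_le_m1)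
  finally show False using card_neighbours_top card_V by simp
qed

definition side :: bool where "side = snd (f V)"

lemma f_top: "f V = (0, side)"
  using f_top_on_spine by (simp add: side_def prod_eq_iff)

lemma f_deletions: "(\<lambda>v. f (V - {v})) ` V = insert (0, \<not> side) ({1..r} \<times> {side})"
proof -
  have "(\<lambda>v. f (V - {v})) ` V = f ` {T. ZTAR_E V E V T}"
    by (simp add: ZTAR_neighbours_top[OF graph no_isolated] image_image)
  also have "\<dots> = insert (0, \<not> side) ({1..r} \<times> {side})"
    by (simp add: image_neighbours[OF top_in_ZTAR_V] f_top book_neighbours_spine)
  finally show ?thesis .
qed

definition level :: "'a \<Rightarrow> nat" where "level v = fst (f (V - {v}))"

lemma f_deletion: "v \<in> V \<Longrightarrow> f (V - {v}) = (level v, if level v = 0 then \<not> side else side)"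
proof -
  assume "v \<in> V"
  then have "f (V - {v}) \<in> insert (0, \<not> side) ({1..r} \<times> {side})"
    using f_deletions by blast
  then show ?thesis by (cases "f (V - {v})") (auto simp: level_def)
qed

lemma bij_betw_level: "bij_betw level V (star_V r)"
proof -
  have "inj_on (\<lambda>v. f (V - {v})) V"
  proof (rule inj_onI)
    fix v w assume "v \<in> V" "w \<in> V" "f (V - {v}) = f (V - {w})"
    then have "V - {v} = V - {w}" using f_eq_iff deletion_in_ZTAR_V by blast
    with \<open>v \<in> V\<close> \<open>w \<in> V\<close> show "v = w" by blast
  qed
  then have "bij_betw (\<lambda>v. f (V - {v})) V (insert (0, \<not> side) ({1..r} \<times> {side}))"
    using f_deletions by (simp add: bij_betw_def)
  moreover have "bij_betw fst (insert (0, \<not> side) ({1..r} \<times> {side})) (star_V r)"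
    by (auto simp: bij_betw_def inj_on_def star_V_def image_iff)
  ultimately show ?thesis
    unfolding level_def using bij_betw_trans by (fastforce simp: comp_def)
qed

lemma level_eq_iff: "v \<in> V \<Longrightarrow> w \<in> V \<Longrightarrow> level v = level w \<longleftrightarrow> v = w"
  using bij_betw_imp_inj_on[OF bij_betw_level] by (auto dest: inj_onD)

lemma level_le: "v \<in> V \<Longrightarrow> level v \<le> r"
  using bij_betwE[OF bij_betw_level] by (auto simp: star_V_def)

lemma zero_forcing_pair_with_centre:
  assumes "c \<in> V" "level c = 0" "w \<in> V" "w \<noteq> c"
  shows "zero_forcing_set V E (V - {c, w})"
proof -
  have "level w \<noteq> 0" using assms level_eq_iff by metis
  then have fw: "f (V - {w}) = (level w, side)" and fc: "f (V - {c}) = (0, \<not> side)"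
    using f_deletion assms by auto
  have "(level w, \<not> side) \<in> book_V r" using level_le assms(3) by (simp add: book_V_eq)
  then obtain T where T: "T \<in> ZTAR_V V E" "f T = (level w, \<not> side)"
    using bij by (metis bij_betw_imp_surj_on imageE)
  have "ZTAR_E V E (V - {c}) T" "ZTAR_E V E (V - {w}) T"
    using edges T deletion_in_ZTAR_V assms fw fc \<open>level w \<noteq> 0\<close> level_le
    by (auto simp: book_E_iff)
  moreover have "T \<noteq> V" using T(2) f_top \<open>level w \<noteq> 0\<close> by auto
  ultimately have "T = V - {c, w}" using ZTAR_common_neighbour assms by metis
  with T(1) show ?thesis by (simp add: ZTAR_V_def)
qed

lemma not_zero_forcing_pair_without_centre:
  assumes "v \<in> V" "w \<in> V" "v \<noteq> w" "level v \<noteq> 0" "level w \<noteq> 0"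
  shows "\<not> zero_forcing_set V E (V - {v, w})"
proof
  let ?S = "V - {v, w}"
  assume S: "zero_forcing_set V E ?S"
  have "?S = V - {w, v}" by blast
  then have "ZTAR_E V E (V - {v}) ?S" "ZTAR_E V E (V - {w}) ?S"
    using ZTAR_E_Diff_pair[of V E v w] ZTAR_E_Diff_pair[of V E w v] S deletion_in_ZTAR_V assms
    by (auto simp: ZTAR_V_def)
  then have "book_E r (level v, side) (f ?S)" "book_E r (level w, side) (f ?S)"
    using edges S deletion_in_ZTAR_V f_deletion assms by (auto simp: ZTAR_V_def)
  then have "f ?S \<in> {(level v, \<not> side), (0, side)} \<inter> {(level w, \<not> side), (0, side)}"
    using book_neighbours_page assms(4,5) by blast
  then have "f ?S = f V" using level_eq_iff assms f_top by auto
  then have "?S = V" using f_eq_iff S top_in_ZTAR_V by (simp add: ZTAR_V_def)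
  with assms(1) show False by blast
qed

end

theorem proposition2p35:
  fixes V :: "'a set" and E :: "'a \<Rightarrow> 'a \<Rightarrow> bool" and r :: nat
  assumes "graph V E"
    and "card V \<ge> 3"
    and "\<forall>v\<in>V. \<exists>u. E v u"
    and "r \<ge> 1"
    and "graph_iso (ZTAR_V V E) (ZTAR_E V E)
           (cart_V (star_V r) K2_V) (cart_E (star_V r) (star_E r) K2_V K2_E)"
  shows "graph_iso V E (star_V r) (star_E r)"
proof -
  obtain f where "bij_betw f (ZTAR_V V E) (book_V r)"
    and "\<forall>S\<in>ZTAR_V V E. \<forall>T\<in>ZTAR_V V E. ZTAR_E V E S T \<longleftrightarrow> book_E r (f S) (f T)"
    using assms(5) unfolding graph_iso_def by blast
  then interpret ZTAR_book_iso V E r f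
    using assms(1-3) by unfold_locales
  obtain c where c: "c \<in> V" "level c = 0"
    using bij_betw_level by (metis atLeastAtMost_iff bij_betw_iff_bijections le0 star_V_def)
  have "E x y \<longleftrightarrow> x \<in> V \<and> y \<in> V \<and> (x = c \<longleftrightarrow> y \<noteq> c)" for x y
  proof (rule star_if_zero_forcing_pairs[OF assms(1,3) c(1)])
    show "zero_forcing_set V E (V - {c, w})" if "w \<in> V - {c}" for w
      using zero_forcing_pair_with_centre c that by blast
    show "\<not> zero_forcing_set V E (V - {v, w})" if "v \<in> V - {c}" "w \<in> V - {c}" "v \<noteq> w" for v w
      using not_zero_forcing_pair_without_centre level_eq_iff c that by (metis Diff_iff insertI1)
  qed
  then show ?thesis using graph_iso_starI[OF bij_betw_level c] by blast
qed

end
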